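(* Let $\mathbb{K}$ be a field with $\mathbb{Q}\subseteq\mathbb{K}\subseteq\mathbb{C}$, and let $n\ge 1$. Suppose the complex numbers $x_1,\dots,x_n$ and $y_1,\dots,y_n$ satisfy the system $$f_j(x_1,\dots,x_n,y_1,\dots,y_n)=0\qquad(j=1,\dots,n)$$ for some polynomials $f_j(X_1,\dots,X_n,Y_1,\dots,Y_n)\in\mathbb{K}[X_1,\dots,X_n,Y_1,\dots,Y_n]$, $j=1,\dots,n$. If $x_1,\dots,x_n$ are algebraically independent over $\mathbb{K}$ and $$\det\Big(\frac{\partial f_j}{\partial X_i}(x_1,\dots,x_n,y_1,\dots,y_n)\Big)_{1\le i,j\le n}\neq 0,$$ then $y_1,\dots,y_n$ are algebraically independent over $\mathbb{K}$.
   Context: In the Jacobian matrix, $j$ indexes rows and $i$ indexes columns (the determinant is of an $n\times n$ matrix). *)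

theory Defs
  imports Complex_Main "HOL-Library.Poly_Mapping" "Jordan_Normal_Form.Determinant"
begin

type_synonym 'v mpoly_c = "('v \<Rightarrow>\<^sub>0 nat) \<Rightarrow>\<^sub>0 complex"

definition coeffs_in :: "complex set \<Rightarrow> 'v mpoly_c \<Rightarrow> bool" where
  "coeffs_in K p \<longleftrightarrow> (\<forall>m. Poly_Mapping.lookup p m \<in> K)"

definition mvars :: "'v mpoly_c \<Rightarrow> 'v set" where
  "mvars p = \<Union> (Poly_Mapping.keys ` Poly_Mapping.keys p)"

definition mpeval :: "'v mpoly_c \<Rightarrow> ('v \<Rightarrow> complex) \<Rightarrow> complex" where
  "mpeval p a = (\<Sum>m\<in>Poly_Mapping.keys p. Poly_Mapping.lookup p m * (\<Prod>v\<in>Poly_Mapping.keys m. a v ^ Poly_Mapping.lookup m v))"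

definition mpderiv :: "'v \<Rightarrow> 'v mpoly_c \<Rightarrow> 'v mpoly_c" where
  "mpderiv v p = Abs_poly_mapping
     (\<lambda>m. of_nat (Poly_Mapping.lookup m v + 1) * Poly_Mapping.lookup p (m + Poly_Mapping.single v 1))"

definition is_subfield_C :: "complex set \<Rightarrow> bool" where
  "is_subfield_C K \<longleftrightarrow> 0 \<in> K \<and> 1 \<in> K \<and>
     (\<forall>a\<in>K. \<forall>b\<in>K. a + b \<in> K \<and> a * b \<in> K) \<and>
     (\<forall>a\<in>K. - a \<in> K) \<and> (\<forall>a\<in>K. a \<noteq> 0 \<longrightarrow> inverse a \<in> K)"

definition alg_indep :: "complex set \<Rightarrow> nat \<Rightarrow> (nat \<Rightarrow> complex) \<Rightarrow> bool" where
  "alg_indep K n z \<longleftrightarrow>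
     (\<forall>p :: nat mpoly_c. coeffs_in K p \<and> mvars p \<subseteq> {..<n} \<and> mpeval p z = 0 \<longrightarrow> p = 0)"

end

theory Submission
  imports Defs "HOL-Computational_Algebra.Polynomial"
begin

text \<open>
  For a subring \<open>E \<subseteq> \<complex>\<close> containing \<open>K\<close>, call a map \<open>D\<close> a \<open>K\<close>-derivation on \<open>E\<close> if it is additive,
  satisfies Leibniz' rule and kills \<open>K\<close>. Adjoining one element at a time, such derivations can always
  be extended, with arbitrary prescribed value on a transcendental element. Since \<open>x\<^sub>1,\<dots>,x\<^sub>n\<close> are
  algebraically independent, this yields for every \<open>i\<close> a \<open>K\<close>-derivation \<open>D\<^sub>i\<close> defined on all \<open>x\<^sub>l, y\<^sub>k\<close>
  with \<open>D\<^sub>i x\<^sub>l = \<delta>\<^sub>i\<^sub>l\<close>. Applying \<open>D\<^sub>i\<close> to \<open>f\<^sub>j(x, y) = 0\<close> gives, by the chain rule,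
  \<open>\<partial>f\<^sub>j/\<partial>X\<^sub>i = - \<Sum>\<^sub>k \<partial>f\<^sub>j/\<partial>Y\<^sub>k \<cdot> D\<^sub>i y\<^sub>k\<close>, so the Jacobian factors through the matrix \<open>(D\<^sub>i y\<^sub>k)\<close>, which is
  therefore nonsingular. Finally, if a nonzero \<open>P\<close> over \<open>K\<close> vanished at \<open>y\<close>, take one of least size;
  applying all \<open>D\<^sub>i\<close> to \<open>P(y) = 0\<close> and inverting \<open>(D\<^sub>i y\<^sub>k)\<close> shows that every \<open>\<partial>P/\<partial>Y\<^sub>k\<close> vanishes at \<open>y\<close>,
  so by minimality \<open>P\<close> is constant, hence zero.
\<close>

section \<open>Subrings of the complex numbers and their derivations\<close>

definition subring_C :: "complex set \<Rightarrow> bool" where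
  "subring_C E \<longleftrightarrow> 1 \<in> E \<and> (\<forall>a\<in>E. \<forall>b\<in>E. a + b \<in> E \<and> a * b \<in> E) \<and> (\<forall>a\<in>E. - a \<in> E)"

definition derivation_on :: "complex set \<Rightarrow> (complex \<Rightarrow> complex) \<Rightarrow> bool" where
  "derivation_on E D \<longleftrightarrow> (\<forall>a\<in>E. \<forall>b\<in>E. D (a + b) = D a + D b \<and> D (a * b) = a * D b + b * D a)"

definition derivation_over :: "complex set \<Rightarrow> complex set \<Rightarrow> (complex \<Rightarrow> complex) \<Rightarrow> bool" where
  "derivation_over K E D \<longleftrightarrow> subring_C E \<and> derivation_on E D \<and> K \<subseteq> E \<and> (\<forall>c\<in>K. D c = 0)"

lemma subfield_imp_subring_C: "is_subfield_C K \<Longrightarrow> subring_C K"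
  by (simp add: is_subfield_C_def subring_C_def)

context
  fixes E :: "complex set"
  assumes E: "subring_C E"
begin

lemma subring_C_one: "1 \<in> E"
  using E by (simp add: subring_C_def)

lemma subring_C_add: "a \<in> E \<Longrightarrow> b \<in> E \<Longrightarrow> a + b \<in> E"
  using E by (simp add: subring_C_def)

lemma subring_C_mult: "a \<in> E \<Longrightarrow> b \<in> E \<Longrightarrow> a * b \<in> E"
  using E by (simp add: subring_C_def)

lemma subring_C_uminus: "a \<in> E \<Longrightarrow> - a \<in> E"
  using E by (simp add: subring_C_def)

lemma subring_C_zero: "0 \<in> E"
  using subring_C_add[of 1 "-1"] subring_C_one subring_C_uminus by fastforce

lemma subring_C_diff: "a \<in> E \<Longrightarrow> b \<in> E \<Longrightarrow> a - b \<in> E"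
  using subring_C_add[of a "-b"] subring_C_uminus by fastforce

lemma subring_C_sum: "(\<And>i. i \<in> I \<Longrightarrow> h i \<in> E) \<Longrightarrow> sum h I \<in> E"
  by (induction I rule: infinite_finite_induct) (auto simp: subring_C_zero subring_C_add)

lemma subring_C_prod: "(\<And>i. i \<in> I \<Longrightarrow> h i \<in> E) \<Longrightarrow> prod h I \<in> E"
  by (induction I rule: infinite_finite_induct) (auto simp: subring_C_one subring_C_mult)

lemma subring_C_power: "a \<in> E \<Longrightarrow> a ^ k \<in> E"
  by (induction k) (auto simp: subring_C_one subring_C_mult)

lemma subring_C_of_nat: "of_nat k \<in> E"
  by (induction k) (auto simp: subring_C_zero subring_C_one subring_C_add)

context
  fixes D :: "complex \<Rightarrow> complex"
  assumes D: "derivation_on E D"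
begin

lemma derivation_on_add: "a \<in> E \<Longrightarrow> b \<in> E \<Longrightarrow> D (a + b) = D a + D b"
  using D by (simp add: derivation_on_def)

lemma derivation_on_mult: "a \<in> E \<Longrightarrow> b \<in> E \<Longrightarrow> D (a * b) = a * D b + b * D a"
  using D by (simp add: derivation_on_def)

lemma derivation_on_zero: "D 0 = 0"
  using derivation_on_add[of 0 0] subring_C_zero by force

lemma derivation_on_one: "D 1 = 0"
  using derivation_on_mult[of 1 1] subring_C_one by force

lemma derivation_on_uminus: "a \<in> E \<Longrightarrow> D (- a) = - D a"
  using derivation_on_add[of a "-a"] subring_C_uminus derivation_on_zero
  by (metis add.right_inverse add_eq_0_iff)

lemma derivation_on_diff: "a \<in> E \<Longrightarrow> b \<in> E \<Longrightarrow> D (a - b) = D a - D b"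
  using derivation_on_add[of a "-b"] derivation_on_uminus[of b] subring_C_uminus by fastforce

lemma derivation_on_sum: "(\<And>i. i \<in> I \<Longrightarrow> h i \<in> E) \<Longrightarrow> D (sum h I) = (\<Sum>i\<in>I. D (h i))"
proof (induction I rule: infinite_finite_induct)
  case (insert x F)
  then show ?case using derivation_on_add[of "h x" "sum h F"] subring_C_sum[of F h] by auto
qed (auto simp: derivation_on_zero)

lemma derivation_on_prod:
  "finite I \<Longrightarrow> (\<And>i. i \<in> I \<Longrightarrow> h i \<in> E) \<Longrightarrow> D (prod h I) = (\<Sum>v\<in>I. D (h v) * prod h (I - {v}))"
proof (induction I rule: finite_induct)
  case empty
  then show ?case by (simp add: derivation_on_one)
next
  case (insert x F)
  have "D (prod h (insert x F)) = h x * D (prod h F) + prod h F * D (h x)"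
    using insert derivation_on_mult[of "h x" "prod h F"] subring_C_prod[of F h] by auto
  also have "\<dots> = (\<Sum>v\<in>F. D (h v) * (h x * prod h (F - {v}))) + D (h x) * prod h F"
    using insert by (simp add: sum_distrib_left algebra_simps)
  also have "\<dots> = (\<Sum>v\<in>insert x F. D (h v) * prod h (insert x F - {v}))"
  proof -
    have "prod h (insert x F - {v}) = h x * prod h (F - {v})" if "v \<in> F" for v
    proof -
      have "insert x F - {v} = insert x (F - {v})" "x \<notin> F - {v}" using insert that by auto
      then show ?thesis using insert by simp
    qed
    moreover have "insert x F - {x} = F" using insert by auto
    ultimately show ?thesis using insert by simp
  qed
  finally show ?case .
qed

lemma derivation_on_power: "a \<in> E \<Longrightarrow> D (a ^ k) = of_nat k * a ^ (k - 1) * D a"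
proof (induction k)
  case 0
  then show ?case by (simp add: derivation_on_one)
next
  case (Suc k)
  then have "D (a ^ Suc k) = a * D (a ^ k) + a ^ k * D a"
    using derivation_on_mult[of a "a ^ k"] subring_C_power by auto
  also have "\<dots> = of_nat (Suc k) * a ^ k * D a"
    using Suc by (cases k) (auto simp: algebra_simps)
  finally show ?case by simp
qed

end

end

section \<open>Polynomials over a subring and simple ring extensions\<close>

definition poly_over :: "complex set \<Rightarrow> complex poly \<Rightarrow> bool" where
  "poly_over E p \<longleftrightarrow> (\<forall>i. coeff p i \<in> E)"

definition adjoin :: "complex set \<Rightarrow> complex \<Rightarrow> complex set" where
  "adjoin E t = {poly p t | p. poly_over E p}"

lemma poly_over_mono: "E \<subseteq> E' \<Longrightarrow> poly_over E p \<Longrightarrow> poly_over E' p"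
  by (auto simp: poly_over_def)

lemma adjoin_mono: "E \<subseteq> E' \<Longrightarrow> adjoin E t \<subseteq> adjoin E' t"
  unfolding adjoin_def using poly_over_mono by blast

context
  fixes E :: "complex set"
  assumes E: "subring_C E"
begin

lemma poly_over_add: "poly_over E p \<Longrightarrow> poly_over E q \<Longrightarrow> poly_over E (p + q)"
  by (simp add: poly_over_def subring_C_add[OF E])

lemma poly_over_uminus: "poly_over E p \<Longrightarrow> poly_over E (- p)"
  by (simp add: poly_over_def subring_C_uminus[OF E])

lemma poly_over_diff: "poly_over E p \<Longrightarrow> poly_over E q \<Longrightarrow> poly_over E (p - q)"
  by (simp add: poly_over_def subring_C_diff[OF E])

lemma poly_over_mult: "poly_over E p \<Longrightarrow> poly_over E q \<Longrightarrow> poly_over E (p * q)"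
  unfolding poly_over_def coeff_mult by (auto intro!: subring_C_sum[OF E] subring_C_mult[OF E])

lemma poly_over_const: "c \<in> E \<Longrightarrow> poly_over E [:c:]"
  by (simp add: poly_over_def coeff_pCons subring_C_zero[OF E] split: nat.split)

lemma poly_over_X: "poly_over E [:0, 1:]"
  by (simp add: poly_over_def coeff_pCons subring_C_zero[OF E] subring_C_one[OF E] split: nat.split)

lemma poly_over_monom: "c \<in> E \<Longrightarrow> poly_over E (monom c k)"
  by (simp add: poly_over_def coeff_monom subring_C_zero[OF E])

lemma poly_over_smult: "c \<in> E \<Longrightarrow> poly_over E p \<Longrightarrow> poly_over E (smult c p)"
  by (simp add: poly_over_def subring_C_mult[OF E])

lemma poly_over_pderiv: "poly_over E p \<Longrightarrow> poly_over E (pderiv p)"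
  unfolding poly_over_def coeff_pderiv by (metis subring_C_mult[OF E] subring_C_of_nat[OF E])

lemma subring_C_adjoin: "subring_C (adjoin E t)"
proof -
  have "a + b \<in> adjoin E t \<and> a * b \<in> adjoin E t" if ab: "a \<in> adjoin E t" "b \<in> adjoin E t" for a b
  proof -
    obtain p q where "poly_over E p" "a = poly p t" "poly_over E q" "b = poly q t"
      using ab unfolding adjoin_def by blast
    then have "a + b = poly (p + q) t" "poly_over E (p + q)" "a * b = poly (p * q) t" "poly_over E (p * q)"
      using poly_over_add poly_over_mult by auto
    then show ?thesis unfolding adjoin_def by blast
  qed
  moreover have "- a \<in> adjoin E t" if a: "a \<in> adjoin E t" for a
  proof -
    obtain p where "poly_over E p" "a = poly p t" using a unfolding adjoin_def by blast
    then show ?thesis unfolding adjoin_def using poly_over_uminus by (auto intro!: exI[of _ "- p"])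
  qed
  moreover have "1 \<in> adjoin E t"
    unfolding adjoin_def using poly_over_const[OF subring_C_one[OF E]] by (auto intro!: exI[of _ "[:1:]"])
  ultimately show ?thesis unfolding subring_C_def by auto
qed

lemma subset_adjoin: "E \<subseteq> adjoin E t"
  unfolding adjoin_def using poly_over_const by (auto intro!: exI[of _ "[:e:]" for e])

lemma mem_adjoin: "t \<in> adjoin E t"
  unfolding adjoin_def using poly_over_X by (auto intro!: exI[of _ "[:0, 1:]"])

end

section \<open>Extending a derivation to a simple ring extension\<close>

text \<open>The value that an extension of \<open>D\<close> with \<open>D t = v\<close> must take at \<open>p(t)\<close>.\<close>

definition derivation_ext :: "(complex \<Rightarrow> complex) \<Rightarrow> complex \<Rightarrow> complex \<Rightarrow> complex poly \<Rightarrow> complex" where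
  "derivation_ext D t v p = poly (map_poly D p) t + poly (pderiv p) t * v"

definition ext_compatible :: "complex set \<Rightarrow> (complex \<Rightarrow> complex) \<Rightarrow> complex \<Rightarrow> complex \<Rightarrow> bool" where
  "ext_compatible E D t v \<longleftrightarrow> (\<forall>p. poly_over E p \<and> poly p t = 0 \<longrightarrow> derivation_ext D t v p = 0)"

context
  fixes E :: "complex set" and D :: "complex \<Rightarrow> complex"
  assumes E: "subring_C E" and D: "derivation_on E D"
begin

lemma map_poly_derivation_add:
  "poly_over E p \<Longrightarrow> poly_over E q \<Longrightarrow> map_poly D (p + q) = map_poly D p + map_poly D q"
  by (rule poly_eqI)
    (simp add: coeff_map_poly derivation_on_zero[OF E D] derivation_on_add[OF E D] poly_over_def)

lemma map_poly_derivation_mult: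
  assumes p: "poly_over E p" and q: "poly_over E q"
  shows "map_poly D (p * q) = map_poly D p * q + p * map_poly D q"
proof (rule poly_eqI)
  fix n
  have "coeff (map_poly D (p * q)) n = D (\<Sum>i\<le>n. coeff p i * coeff q (n - i))"
    by (simp add: coeff_map_poly derivation_on_zero[OF E D] coeff_mult)
  also have "\<dots> = (\<Sum>i\<le>n. D (coeff p i * coeff q (n - i)))"
    using p q by (intro derivation_on_sum[OF E D]) (auto simp: poly_over_def subring_C_mult[OF E])
  also have "\<dots> = (\<Sum>i\<le>n. D (coeff p i) * coeff q (n - i)) + (\<Sum>i\<le>n. coeff p i * D (coeff q (n - i)))"
    using p q by (simp add: derivation_on_mult[OF E D] poly_over_def sum.distrib[symmetric] algebra_simps)
  also have "\<dots> = coeff (map_poly D p * q + p * map_poly D q) n"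
    by (simp add: coeff_mult coeff_map_poly derivation_on_zero[OF E D])
  finally show "coeff (map_poly D (p * q)) n = coeff (map_poly D p * q + p * map_poly D q) n" .
qed

lemma derivation_ext_add:
  "poly_over E p \<Longrightarrow> poly_over E q \<Longrightarrow>
    derivation_ext D t v (p + q) = derivation_ext D t v p + derivation_ext D t v q"
  by (simp add: derivation_ext_def map_poly_derivation_add pderiv_add algebra_simps)

lemma derivation_ext_mult:
  "poly_over E p \<Longrightarrow> poly_over E q \<Longrightarrow>
    derivation_ext D t v (p * q) = poly p t * derivation_ext D t v q + poly q t * derivation_ext D t v p"
  by (simp add: derivation_ext_def map_poly_derivation_mult pderiv_mult algebra_simps)

lemma map_poly_derivation_diff:
  "poly_over E p \<Longrightarrow> poly_over E q \<Longrightarrow> map_poly D (p - q) = map_poly D p - map_poly D q"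
  by (rule poly_eqI)
    (simp add: coeff_map_poly derivation_on_zero[OF E D] derivation_on_diff[OF E D] poly_over_def)

lemma derivation_ext_diff:
  "poly_over E p \<Longrightarrow> poly_over E q \<Longrightarrow>
    derivation_ext D t v (p - q) = derivation_ext D t v p - derivation_ext D t v q"
  by (simp add: derivation_ext_def map_poly_derivation_diff pderiv_diff algebra_simps)

lemma derivation_ext_const: "derivation_ext D t v [:c:] = D c"
  by (simp add: derivation_ext_def map_poly_pCons derivation_on_zero[OF E D])

lemma derivation_ext_X: "derivation_ext D t v [:0, 1:] = v"
  by (simp add: derivation_ext_def map_poly_pCons pderiv_pCons
      derivation_on_zero[OF E D] derivation_on_one[OF E D])

lemma derivation_extends_to_adjoin:
  assumes compat: "ext_compatible E D t v"
  shows "\<exists>D'. derivation_on (adjoin E t) D' \<and> (\<forall>e\<in>E. D' e = D e) \<and> D' t = v"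
proof -
  define D' where "D' z = derivation_ext D t v (SOME p. poly_over E p \<and> poly p t = z)" for z
  have D'_poly: "D' (poly p t) = derivation_ext D t v p" if p: "poly_over E p" for p
  proof -
    define q where "q = (SOME q. poly_over E q \<and> poly q t = poly p t)"
    have q: "poly_over E q \<and> poly q t = poly p t"
      unfolding q_def by (rule someI[of _ p]) (use p in auto)
    then have "derivation_ext D t v (q - p) = 0"
      using compat p poly_over_diff[OF E] unfolding ext_compatible_def by auto
    then have "derivation_ext D t v q = derivation_ext D t v p"
      using derivation_ext_diff q p by simp
    then show ?thesis unfolding D'_def q_def by simp
  qed
  have "derivation_on (adjoin E t) D'"
    unfolding derivation_on_def
  proof (intro ballI conjI)
    fix a b assume "a \<in> adjoin E t" "b \<in> adjoin E t"
    then obtain p q where pq: "poly_over E p" "poly_over E q" "a = poly p t" "b = poly q t"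
      unfolding adjoin_def by auto
    show "D' (a + b) = D' a + D' b"
      using D'_poly[of "p + q"] D'_poly[of p] D'_poly[of q] pq poly_over_add[OF E] derivation_ext_add
      by simp
    show "D' (a * b) = a * D' b + b * D' a"
      using D'_poly[of "p * q"] D'_poly[of p] D'_poly[of q] pq poly_over_mult[OF E] derivation_ext_mult
      by simp
  qed
  moreover have "D' e = D e" if "e \<in> E" for e
    using D'_poly[OF poly_over_const[OF E that]] derivation_ext_const by simp
  moreover have "D' t = v"
    using D'_poly[OF poly_over_X[OF E]] derivation_ext_X by simp
  ultimately show ?thesis by blast
qed

lemma ext_compatible_transcendental:
  "\<not> (\<exists>p. poly_over E p \<and> p \<noteq> 0 \<and> poly p t = 0) \<Longrightarrow> ext_compatible E D t v"
  unfolding ext_compatible_def by (auto simp: derivation_ext_def)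

lemma pseudo_division_step:
  assumes p: "poly_over E p" "p \<noteq> 0" and m: "poly_over E m" "m \<noteq> 0"
    and deg: "0 < degree m" "degree m \<le> degree p"
  obtains q where "poly_over E q" "degree q < degree p"
    "smult (lead_coeff m) p = q + monom (lead_coeff p) (degree p - degree m) * m"
proof -
  define r where "r = monom (lead_coeff p) (degree p - degree m) * m"
  define q where "q = smult (lead_coeff m) p - r"
  have lc: "lead_coeff m \<in> E" "lead_coeff p \<in> E" using p m unfolding poly_over_def by auto
  have "poly_over E q" unfolding q_def r_def
    using lc p m by (intro poly_over_diff[OF E] poly_over_smult[OF E] poly_over_mult[OF E]
        poly_over_monom[OF E]) auto
  moreover have "degree q < degree p"
  proof -
    have deg_r: "degree r = degree p"
      using p m deg unfolding r_def by (simp add: degree_mult_eq degree_monom_eq)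
    have "degree q \<le> degree p" unfolding q_def
      using degree_diff_le[of "smult (lead_coeff m) p" "degree p" r] deg_r by simp
    moreover have "coeff q (degree p) = 0"
      using deg unfolding q_def r_def by (simp add: coeff_monom_mult)
    moreover have "degree q \<noteq> degree p" if "q \<noteq> 0"
      using \<open>coeff q (degree p) = 0\<close> that by (metis leading_coeff_0_iff)
    moreover have "0 < degree p" using deg by simp
    ultimately show ?thesis by (cases "q = 0") auto
  qed
  ultimately show ?thesis using that[of q] unfolding q_def r_def by simp
qed

text \<open>For algebraic \<open>t\<close>, the candidate value is read off a minimal polynomial \<open>m\<close> of \<open>t\<close>; its
  derivative does not vanish at \<open>t\<close> by minimality, which needs characteristic zero.\<close>

lemma ext_compatible_algebraic:
  assumes "\<exists>p. poly_over E p \<and> p \<noteq> 0 \<and> poly p t = 0"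
  shows "\<exists>v. ext_compatible E D t v"
proof -
  define P where "P p \<longleftrightarrow> poly_over E p \<and> p \<noteq> 0 \<and> poly p t = 0" for p
  obtain m where "P m" and m_min: "\<And>q. P q \<Longrightarrow> degree m \<le> degree q"
    using ex_has_least_nat[of P _ degree] assms unfolding P_def by metis
  then have m: "poly_over E m" "m \<noteq> 0" "poly m t = 0" unfolding P_def by auto
  have deg_m: "0 < degree m"
  proof (rule ccontr)
    assume "\<not> 0 < degree m"
    then have "m = [:coeff m 0:]" by (metis gr0I degree_0_id)
    then show False using m by (metis pCons_0_0 poly_pCons poly_0 mult_zero_right add.right_neutral)
  qed
  have "poly (pderiv m) t \<noteq> 0"
  proof
    assume "poly (pderiv m) t = 0"
    moreover have "pderiv m \<noteq> 0" using deg_m by (simp add: pderiv_eq_0_iff)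
    ultimately have "degree m \<le> degree (pderiv m)"
      using m_min poly_over_pderiv[OF E m(1)] unfolding P_def by blast
    then show False using deg_m degree_pderiv[of m] by simp
  qed
  define v where "v = - poly (map_poly D m) t / poly (pderiv m) t"
  have ext_m: "derivation_ext D t v m = 0"
    using \<open>poly (pderiv m) t \<noteq> 0\<close> unfolding derivation_ext_def v_def by (simp add: field_simps)
  have "derivation_ext D t v p = 0" if "poly_over E p" "poly p t = 0" for p
    using that
  proof (induction "degree p" arbitrary: p rule: less_induct)
    case less
    show ?case
    proof (cases "p = 0")
      case True
      then show ?thesis by (simp add: derivation_ext_def)
    next
      case False
      then have "degree m \<le> degree p" using m_min less.prems unfolding P_def by auto
      then obtain q where q: "poly_over E q" "degree q < degree p"
        and div: "smult (lead_coeff m) p = q + monom (lead_coeff p) (degree p - degree m) * m"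
        using pseudo_division_step less.prems(1) False m(1,2) deg_m by blast
      let ?r = "monom (lead_coeff p) (degree p - degree m) * m"
      have r: "poly_over E ?r" "poly ?r t = 0"
        using less.prems(1) m by (auto intro!: poly_over_mult[OF E] poly_over_monom[OF E])
          (simp add: poly_over_def)
      have lc: "poly_over E [:lead_coeff m:]" "lead_coeff m \<noteq> 0"
        using m by (auto intro!: poly_over_const[OF E]) (simp add: poly_over_def)
      have "poly q t = 0" using arg_cong[OF div, of "\<lambda>s. poly s t"] less.prems(2) m(3) by simp
      then have "derivation_ext D t v q = 0" using less.hyps q by blast
      moreover have "derivation_ext D t v ?r = 0"
        using derivation_ext_mult[OF poly_over_monom[OF E] m(1)] ext_m m(3) less.prems(1)
        by (simp add: poly_over_def)
      moreover have "derivation_ext D t v (smult (lead_coeff m) p) = lead_coeff m * derivation_ext D t v p"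
        using derivation_ext_mult[OF lc(1) less.prems(1)] less.prems(2) by simp
      ultimately have "lead_coeff m * derivation_ext D t v p = 0"
        using derivation_ext_add[OF q(1) r(1)] div by simp
      then show ?thesis using lc(2) by simp
    qed
  qed
  then show ?thesis unfolding ext_compatible_def by blast
qed

lemma derivation_extends_to_adjoin_any:
  "\<exists>D'. derivation_on (adjoin E t) D' \<and> (\<forall>e\<in>E. D' e = D e)"
proof (cases "\<exists>p. poly_over E p \<and> p \<noteq> 0 \<and> poly p t = 0")
  case True
  then obtain v where "ext_compatible E D t v" using ext_compatible_algebraic by blast
  then show ?thesis using derivation_extends_to_adjoin by blast
next
  case False
  then show ?thesis using derivation_extends_to_adjoin ext_compatible_transcendental by blast
qed

end

section \<open>Evaluation of multivariate polynomials\<close>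

definition monom_eval :: "('v \<Rightarrow>\<^sub>0 nat) \<Rightarrow> ('v \<Rightarrow> complex) \<Rightarrow> complex" where
  "monom_eval m a = (\<Prod>v\<in>Poly_Mapping.keys m. a v ^ Poly_Mapping.lookup m v)"

lemma monom_eval_superset: "finite W \<Longrightarrow> Poly_Mapping.keys m \<subseteq> W \<Longrightarrow>
   monom_eval m a = (\<Prod>v\<in>W. a v ^ Poly_Mapping.lookup m v)"
  unfolding monom_eval_def by (rule prod.mono_neutral_left) (auto simp: in_keys_iff)

lemma mpeval_eq_sum: "mpeval p a = (\<Sum>m\<in>Poly_Mapping.keys p. Poly_Mapping.lookup p m * monom_eval m a)"
  by (simp add: mpeval_def monom_eval_def)

lemma mpeval_superset: "finite S \<Longrightarrow> Poly_Mapping.keys p \<subseteq> S \<Longrightarrow>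
   mpeval p a = (\<Sum>m\<in>S. Poly_Mapping.lookup p m * monom_eval m a)"
  unfolding mpeval_eq_sum by (rule sum.mono_neutral_left) (auto simp: in_keys_iff)

lemma mpeval_0[simp]: "mpeval 0 a = 0"
  by (simp add: mpeval_def)

lemma mpeval_add: "mpeval (p + q) a = mpeval p a + mpeval q a"
proof -
  let ?S = "Poly_Mapping.keys p \<union> Poly_Mapping.keys q"
  have "mpeval (p + q) a = (\<Sum>m\<in>?S. Poly_Mapping.lookup (p + q) m * monom_eval m a)"
    by (rule mpeval_superset) (auto simp: keys_add)
  also have "\<dots> = (\<Sum>m\<in>?S. Poly_Mapping.lookup p m * monom_eval m a) +
      (\<Sum>m\<in>?S. Poly_Mapping.lookup q m * monom_eval m a)"
    by (simp add: lookup_add sum.distrib algebra_simps)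
  also have "\<dots> = mpeval p a + mpeval q a"
    by (subst (1 2) mpeval_superset[where S = ?S]) auto
  finally show ?thesis .
qed

lemma mvars_add: "mvars (p + q) \<subseteq> mvars p \<union> mvars q"
  unfolding mvars_def using keys_add[of p q] by auto

lemma coeffs_in_add: "subring_C K \<Longrightarrow> coeffs_in K p \<Longrightarrow> coeffs_in K q \<Longrightarrow> coeffs_in K (p + q)"
  by (simp add: coeffs_in_def lookup_add subring_C_add)

lemma coeffs_in_0: "subring_C K \<Longrightarrow> coeffs_in K 0"
  by (simp add: coeffs_in_def subring_C_zero)

lemma mvars_0[simp]: "mvars 0 = {}" by (simp add: mvars_def)

abbreviation var_monom :: "'v \<Rightarrow> 'v \<Rightarrow>\<^sub>0 nat" where
  "var_monom v \<equiv> Poly_Mapping.single v 1"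

text \<open>Stated with \<open>Suc 0\<close>, the simplifier's normal form of \<open>1 :: nat\<close>.\<close>

lemma lookup_var_monom [simp]:
  "Poly_Mapping.lookup (Poly_Mapping.single v (Suc 0)) w = (if v = w then Suc 0 else 0)"
  by (simp add: lookup_single)

lemma minus_plus_var_monom: "0 < Poly_Mapping.lookup k v \<Longrightarrow> (k - var_monom v) + var_monom v = k"
  by (rule poly_mapping_eqI) (auto simp: lookup_add lookup_minus)

lemma plus_minus_var_monom: "(k + var_monom v) - var_monom v = k"
  by (rule poly_mapping_eqI) (auto simp: lookup_add lookup_minus)

lemma inj_plus_var_monom: "inj (\<lambda>m. m + var_monom v)"
  by (rule injI) (metis plus_minus_var_monom)

lemma keys_plus_var_monom: "Poly_Mapping.keys (m + var_monom v) \<subseteq> Poly_Mapping.keys m \<union> {v}"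
  using keys_add[of m "var_monom v"] by auto

lemma keys_minus_var_monom: "Poly_Mapping.keys (m - var_monom v) \<subseteq> Poly_Mapping.keys m"
  by (auto simp: in_keys_iff lookup_minus)

lemma monom_eval_plus_var: "monom_eval (m + var_monom v) a = monom_eval m a * a v"
proof -
  let ?W = "Poly_Mapping.keys m \<union> {v}"
  have "monom_eval (m + var_monom v) a = (\<Prod>w\<in>?W. a w ^ Poly_Mapping.lookup (m + var_monom v) w)"
    by (rule monom_eval_superset) (use keys_plus_var_monom[of m v] in auto)
  also have "\<dots> = (\<Prod>w\<in>?W. a w ^ Poly_Mapping.lookup m w) *
      (\<Prod>w\<in>?W. a w ^ Poly_Mapping.lookup (var_monom v) w)"
    by (simp only: lookup_add power_add prod.distrib)
  also have "(\<Prod>w\<in>?W. a w ^ Poly_Mapping.lookup (var_monom v) w) = a v"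
    by (subst prod.mono_neutral_right[of ?W "{v}"]) auto
  also have "(\<Prod>w\<in>?W. a w ^ Poly_Mapping.lookup m w) = monom_eval m a"
    by (rule monom_eval_superset[symmetric]) auto
  finally show ?thesis .
qed

text \<open>\<open>mult_var l G\<close> is the product \<open>X\<^sub>l \<cdot> G\<close>.\<close>

definition mult_var :: "'v \<Rightarrow> 'v mpoly_c \<Rightarrow> 'v mpoly_c" where
  "mult_var l G = Abs_poly_mapping
     (\<lambda>k. if 0 < Poly_Mapping.lookup k l then Poly_Mapping.lookup G (k - var_monom l) else 0)"

lemma lookup_mult_var: "Poly_Mapping.lookup (mult_var l G) =
   (\<lambda>k. if 0 < Poly_Mapping.lookup k l then Poly_Mapping.lookup G (k - var_monom l) else 0)"
proof -
  let ?S = "{k. (if 0 < Poly_Mapping.lookup k l then Poly_Mapping.lookup G (k - var_monom l) else 0) \<noteq> 0}"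
  have "?S \<subseteq> (\<lambda>m. m + var_monom l) ` Poly_Mapping.keys G"
  proof
    fix k assume "k \<in> ?S"
    then have "0 < Poly_Mapping.lookup k l" "k - var_monom l \<in> Poly_Mapping.keys G"
      by (auto split: if_splits simp: in_keys_iff)
    then show "k \<in> (\<lambda>m. m + var_monom l) ` Poly_Mapping.keys G"
      using minus_plus_var_monom by (metis image_eqI)
  qed
  then have "finite ?S" by (rule finite_subset) simp
  then show ?thesis unfolding mult_var_def by (rule lookup_Abs_poly_mapping)
qed

lemma lookup_mult_var_plus:
  "Poly_Mapping.lookup (mult_var l G) (m + var_monom l) = Poly_Mapping.lookup G m"
  by (simp add: lookup_mult_var lookup_add plus_minus_var_monom)

lemma lookup_mult_var_zero:
  "Poly_Mapping.lookup k l = 0 \<Longrightarrow> Poly_Mapping.lookup (mult_var l G) k = 0"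
  by (simp add: lookup_mult_var)

lemma keys_mult_var: "Poly_Mapping.keys (mult_var l G) = (\<lambda>m. m + var_monom l) ` Poly_Mapping.keys G"
proof
  show "Poly_Mapping.keys (mult_var l G) \<subseteq> (\<lambda>m. m + var_monom l) ` Poly_Mapping.keys G"
  proof
    fix k assume k: "k \<in> Poly_Mapping.keys (mult_var l G)"
    then have "0 < Poly_Mapping.lookup k l" using lookup_mult_var_zero by (fastforce simp: in_keys_iff)
    then have "k = (k - var_monom l) + var_monom l" using minus_plus_var_monom by metis
    moreover have "k - var_monom l \<in> Poly_Mapping.keys G"
      using k \<open>0 < Poly_Mapping.lookup k l\<close> by (simp add: in_keys_iff lookup_mult_var)
    ultimately show "k \<in> (\<lambda>m. m + var_monom l) ` Poly_Mapping.keys G" by blast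
  qed
  show "(\<lambda>m. m + var_monom l) ` Poly_Mapping.keys G \<subseteq> Poly_Mapping.keys (mult_var l G)"
  proof
    fix k assume "k \<in> (\<lambda>m. m + var_monom l) ` Poly_Mapping.keys G"
    then obtain m where "k = m + var_monom l" "m \<in> Poly_Mapping.keys G" by blast
    then show "k \<in> Poly_Mapping.keys (mult_var l G)"
      using lookup_mult_var_plus[of l G m] by (simp add: in_keys_iff)
  qed
qed

lemma mpeval_mult_var: "mpeval (mult_var l G) a = mpeval G a * a l"
proof -
  have inj: "inj_on (\<lambda>m. m + var_monom l) (Poly_Mapping.keys G)"
    using inj_plus_var_monom by (rule inj_on_subset) simp
  have "mpeval (mult_var l G) a = (\<Sum>m\<in>Poly_Mapping.keys G.
      Poly_Mapping.lookup (mult_var l G) (m + var_monom l) * monom_eval (m + var_monom l) a)"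
    unfolding mpeval_eq_sum keys_mult_var sum.reindex[OF inj] by simp
  also have "\<dots> = mpeval G a * a l"
    by (simp only: lookup_mult_var_plus monom_eval_plus_var mpeval_eq_sum sum_distrib_right mult.assoc)
  finally show ?thesis .
qed

lemma mvars_mult_var: "mvars (mult_var l G) \<subseteq> mvars G \<union> {l}"
  unfolding mvars_def keys_mult_var using keys_plus_var_monom by fastforce

lemma coeffs_in_mult_var: "subring_C K \<Longrightarrow> coeffs_in K G \<Longrightarrow> coeffs_in K (mult_var l G)"
  by (simp add: coeffs_in_def lookup_mult_var subring_C_zero)

lemma mult_var_eq_0D: "mult_var l G = 0 \<Longrightarrow> G = 0"
  by (rule poly_mapping_eqI) (metis lookup_mult_var_plus lookup_zero)

section \<open>Coordinate derivations for algebraically independent elements\<close>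

definition poly_values :: "complex set \<Rightarrow> nat \<Rightarrow> (nat \<Rightarrow> complex) \<Rightarrow> complex set" where
  "poly_values K l x = {mpeval g x | g. coeffs_in K g \<and> mvars g \<subseteq> {..<l}}"

lemma mem_poly_valuesI: "coeffs_in K g \<Longrightarrow> mvars g \<subseteq> {..<l} \<Longrightarrow> mpeval g x \<in> poly_values K l x"
  unfolding poly_values_def by blast

lemma subset_poly_values:
  assumes K: "subring_C K"
  shows "K \<subseteq> poly_values K l x"
proof
  fix c assume c: "c \<in> K"
  have "mpeval (Poly_Mapping.single 0 c) x =
      (\<Sum>m\<in>{0}. Poly_Mapping.lookup (Poly_Mapping.single 0 c) m * monom_eval m x)"
    by (rule mpeval_superset) auto
  then have "mpeval (Poly_Mapping.single 0 c) x = c" by (simp add: monom_eval_def)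
  moreover have "coeffs_in K (Poly_Mapping.single 0 c)"
    using K c by (simp add: coeffs_in_def lookup_single when_def subring_C_zero)
  moreover have "mvars (Poly_Mapping.single 0 c) \<subseteq> {..<l}" by (simp add: mvars_def)
  ultimately show "c \<in> poly_values K l x" using mem_poly_valuesI by metis
qed

text \<open>Horner's scheme: \<open>p(x\<^sub>l) = p\<^sub>0 + x\<^sub>l \<cdot> q(x\<^sub>l)\<close> with \<open>p = pCons p\<^sub>0 q\<close>; the representative of \<open>p\<^sub>0\<close>
  involves no \<open>X\<^sub>l\<close>, so it cannot cancel against \<open>X\<^sub>l \<cdot> G\<^sub>q\<close>.\<close>

lemma poly_over_poly_values_eval:
  assumes K: "subring_C K" and p: "poly_over (poly_values K l x) p"
  shows "\<exists>G. coeffs_in K G \<and> mvars G \<subseteq> {..<Suc l} \<and> mpeval G x = poly p (x l) \<and> (G = 0 \<longrightarrow> p = 0)"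
  using p
proof (induction p rule: pCons_induct)
  case 0
  then show ?case using coeffs_in_0[OF K] by (intro exI[of _ 0]) auto
next
  case (pCons a q)
  have "poly_over (poly_values K l x) q"
    using pCons.prems unfolding poly_over_def by (metis coeff_pCons_Suc)
  then obtain Gq where Gq: "coeffs_in K Gq" "mvars Gq \<subseteq> {..<Suc l}" "mpeval Gq x = poly q (x l)"
    "Gq = 0 \<longrightarrow> q = 0"
    using pCons.IH by blast
  have "a \<in> poly_values K l x"
    using pCons.prems unfolding poly_over_def by (metis coeff_pCons_0)
  then obtain g where g: "coeffs_in K g" "mvars g \<subseteq> {..<l}" "mpeval g x = a"
    unfolding poly_values_def by blast
  define G where "G = g + mult_var l Gq"
  have "coeffs_in K G" unfolding G_def by (rule coeffs_in_add[OF K g(1) coeffs_in_mult_var[OF K Gq(1)]])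
  moreover have "mvars G \<subseteq> {..<Suc l}"
  proof -
    have "mvars g \<union> mvars (mult_var l Gq) \<subseteq> {..<Suc l}"
      using mvars_mult_var[of l Gq] Gq(2) g(2) by auto
    then show ?thesis using mvars_add[of g "mult_var l Gq"] unfolding G_def by blast
  qed
  moreover have "mpeval G x = poly (pCons a q) (x l)"
    unfolding G_def by (simp only: mpeval_add mpeval_mult_var g(3) Gq(3) poly_pCons mult.commute)
  moreover have "pCons a q = 0" if G0: "G = 0"
  proof -
    have "Poly_Mapping.lookup g m = 0" for m
    proof (cases "Poly_Mapping.lookup m l = 0")
      case True
      have "Poly_Mapping.lookup (g + mult_var l Gq) m = 0" using G0 unfolding G_def by simp
      then show ?thesis using lookup_mult_var_zero[OF True, of Gq] by (simp add: lookup_add)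
    next
      case False
      have "m \<notin> Poly_Mapping.keys g"
      proof
        assume "m \<in> Poly_Mapping.keys g"
        then have "l \<in> mvars g" using False unfolding mvars_def by (auto simp: in_keys_iff)
        then show False using g(2) by auto
      qed
      then show ?thesis by (simp add: in_keys_iff)
    qed
    then have "g = 0" by (intro poly_mapping_eqI) simp
    then have "a = 0" "Gq = 0" using g(3) G0 mult_var_eq_0D[of l Gq] unfolding G_def by auto
    then show ?thesis using Gq(4) by simp
  qed
  ultimately show ?case by blast
qed

lemma adjoin_poly_values_subset:
  assumes K: "subring_C K"
  shows "adjoin (poly_values K l x) (x l) \<subseteq> poly_values K (Suc l) x"
proof
  fix e assume "e \<in> adjoin (poly_values K l x) (x l)"
  then obtain p where "poly_over (poly_values K l x) p" "e = poly p (x l)" unfolding adjoin_def by blast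
  then show "e \<in> poly_values K (Suc l) x"
    using poly_over_poly_values_eval[OF K] mem_poly_valuesI by metis
qed

lemma poly_values_var_transcendental:
  assumes K: "subring_C K" and indep: "alg_indep K n x" and "l < n"
    and p: "poly_over (poly_values K l x) p" and root: "poly p (x l) = 0"
  shows "p = 0"
proof -
  obtain G where G: "coeffs_in K G" "mvars G \<subseteq> {..<Suc l}" "mpeval G x = poly p (x l)"
    "G = 0 \<longrightarrow> p = 0"
    using poly_over_poly_values_eval[OF K p] by blast
  have "mvars G \<subseteq> {..<n}" using G(2) \<open>l < n\<close> by auto
  then have "G = 0" using indep G root unfolding alg_indep_def by auto
  then show ?thesis using G(4) by simp
qed

lemma derivation_over_adjoin:
  "derivation_over K E D \<Longrightarrow> derivation_on (adjoin E t) D' \<Longrightarrow> \<forall>e\<in>E. D' e = D e \<Longrightarrow>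
    derivation_over K (adjoin E t) D'"
  unfolding derivation_over_def using subring_C_adjoin subset_adjoin by (metis subset_iff)

lemma derivation_over_on_vars:
  assumes K: "subring_C K" and indep: "alg_indep K n x"
  shows "l \<le> n \<Longrightarrow> \<exists>E D. derivation_over K E D \<and> E \<subseteq> poly_values K l x \<and>
    (\<forall>l'<l. x l' \<in> E \<and> D (x l') = (if l' = i then 1 else 0))"
proof (induction l)
  case 0
  have "derivation_over K K (\<lambda>_. 0)" using K by (simp add: derivation_over_def derivation_on_def)
  then show ?case using subset_poly_values[OF K] by blast
next
  case (Suc l)
  then obtain E D where ED: "derivation_over K E D" and E_sub: "E \<subseteq> poly_values K l x"
    and vars: "\<forall>l'<l. x l' \<in> E \<and> D (x l') = (if l' = i then 1 else 0)"
    by auto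
  have E: "subring_C E" and D: "derivation_on E D" using ED by (auto simp: derivation_over_def)
  have "\<not> (\<exists>p. poly_over E p \<and> p \<noteq> 0 \<and> poly p (x l) = 0)"
    using poly_values_var_transcendental[OF K indep, of l] poly_over_mono[OF E_sub] Suc.prems
    by (metis Suc_le_eq)
  then obtain D' where D': "derivation_on (adjoin E (x l)) D'" "\<forall>e\<in>E. D' e = D e"
    "D' (x l) = (if l = i then 1 else 0)"
    using derivation_extends_to_adjoin[OF E D ext_compatible_transcendental[OF E D]] by blast
  have "derivation_over K (adjoin E (x l)) D'" using derivation_over_adjoin[OF ED D'(1,2)] .
  moreover have "adjoin E (x l) \<subseteq> poly_values K (Suc l) x"
    using adjoin_mono[OF E_sub] adjoin_poly_values_subset[OF K] by blast
  moreover have "\<forall>l'<Suc l. x l' \<in> adjoin E (x l) \<and> D' (x l') = (if l' = i then 1 else 0)"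
    using vars D' subset_adjoin[OF E] mem_adjoin[OF E] by (auto simp: less_Suc_eq)
  ultimately show ?case by blast
qed

lemma derivation_over_extends_to_values:
  fixes y :: "nat \<Rightarrow> complex" and k :: nat
  assumes "derivation_over K E D"
  shows "\<exists>E' D'. derivation_over K E' D' \<and> E \<subseteq> E' \<and> (\<forall>e\<in>E. D' e = D e) \<and> (\<forall>k'<k. y k' \<in> E')"
proof (induction k)
  case 0
  then show ?case using assms by blast
next
  case (Suc k)
  then obtain E' D' where ED': "derivation_over K E' D'" "E \<subseteq> E'" "\<forall>e\<in>E. D' e = D e"
    "\<forall>k'<k. y k' \<in> E'"
    by blast
  have E': "subring_C E'" and D': "derivation_on E' D'" using ED' by (auto simp: derivation_over_def)
  obtain D'' where D'': "derivation_on (adjoin E' (y k)) D''" "\<forall>e\<in>E'. D'' e = D' e"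
    using derivation_extends_to_adjoin_any[OF E' D'] by blast
  have "derivation_over K (adjoin E' (y k)) D''" using derivation_over_adjoin[OF ED'(1) D''] .
  moreover have "E \<subseteq> adjoin E' (y k)" using ED'(2) subset_adjoin[OF E'] by blast
  moreover have "\<forall>e\<in>E. D'' e = D e" using ED'(2,3) D''(2) by auto
  moreover have "\<forall>k'<Suc k. y k' \<in> adjoin E' (y k)"
    using ED'(4) subset_adjoin[OF E', of "y k"] mem_adjoin[OF E', of "y k"] by (auto simp: less_Suc_eq)
  ultimately show ?case by blast
qed

lemma coordinate_derivations:
  assumes "subring_C K" and "alg_indep K n x"
  obtains E D where "\<forall>i. derivation_over K (E i) (D i) \<and>
    (\<forall>l<n. x l \<in> E i \<and> D i (x l) = (if l = i then 1 else 0)) \<and> (\<forall>k<n. y k \<in> E i)"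
proof -
  have "\<exists>E D. derivation_over K E D \<and> (\<forall>l<n. x l \<in> E \<and> D (x l) = (if l = i then 1 else 0)) \<and>
      (\<forall>k<n. y k \<in> E)" for i
  proof -
    obtain E0 D0 where "derivation_over K E0 D0" "\<forall>l<n. x l \<in> E0 \<and> D0 (x l) = (if l = i then 1 else 0)"
      using derivation_over_on_vars[OF assms, of n i] by blast
    then show ?thesis using derivation_over_extends_to_values[of K E0 D0 n y] by (metis subsetD)
  qed
  then show ?thesis using that by metis
qed

section \<open>Partial derivatives and the chain rule for derivations\<close>

lemma lookup_mpderiv: "Poly_Mapping.lookup (mpderiv v p) m =
   of_nat (Poly_Mapping.lookup m v + 1) * Poly_Mapping.lookup p (m + var_monom v)"
proof -
  let ?S = "{m. of_nat (Poly_Mapping.lookup m v + 1) * Poly_Mapping.lookup p (m + var_monom v) \<noteq> (0::complex)}"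
  have "?S \<subseteq> (\<lambda>m. m + var_monom v) -` Poly_Mapping.keys p" by (auto simp: in_keys_iff)
  moreover have "finite ((\<lambda>m. m + var_monom v) -` Poly_Mapping.keys p)"
    by (rule finite_vimageI) (simp_all add: inj_plus_var_monom)
  ultimately have "finite ?S" by (rule finite_subset)
  then show ?thesis unfolding mpderiv_def by simp
qed

lemma inj_on_minus_var_monom: "inj_on (\<lambda>m. m - var_monom v) {m. 0 < Poly_Mapping.lookup m v}"
  by (rule inj_onI) (metis mem_Collect_eq minus_plus_var_monom)

lemma keys_mpderiv_subset:
  "Poly_Mapping.keys (mpderiv v p) \<subseteq>
    (\<lambda>m. m - var_monom v) ` {m \<in> Poly_Mapping.keys p. 0 < Poly_Mapping.lookup m v}"
proof
  fix m' assume "m' \<in> Poly_Mapping.keys (mpderiv v p)"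
  then have "m' + var_monom v \<in> {m \<in> Poly_Mapping.keys p. 0 < Poly_Mapping.lookup m v}"
    by (auto simp: in_keys_iff lookup_mpderiv lookup_add)
  moreover have "m' = (m' + var_monom v) - var_monom v" using plus_minus_var_monom[of m' v] by simp
  ultimately show "m' \<in> (\<lambda>m. m - var_monom v) ` {m \<in> Poly_Mapping.keys p. 0 < Poly_Mapping.lookup m v}"
    by blast
qed

lemma mpeval_mpderiv:
  "mpeval (mpderiv v p) a = (\<Sum>m\<in>Poly_Mapping.keys p.
    Poly_Mapping.lookup p m * (of_nat (Poly_Mapping.lookup m v) * monom_eval (m - var_monom v) a))"
proof -
  define A where "A = {m \<in> Poly_Mapping.keys p. 0 < Poly_Mapping.lookup m v}"
  have inj: "inj_on (\<lambda>m. m - var_monom v) A"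
    using inj_on_minus_var_monom by (rule inj_on_subset) (auto simp: A_def)
  have "mpeval (mpderiv v p) a =
      (\<Sum>m'\<in>(\<lambda>m. m - var_monom v) ` A. Poly_Mapping.lookup (mpderiv v p) m' * monom_eval m' a)"
    by (rule mpeval_superset[OF _ keys_mpderiv_subset[of v p, folded A_def]]) (simp add: A_def)
  also have "\<dots> = (\<Sum>m\<in>A.
      Poly_Mapping.lookup (mpderiv v p) (m - var_monom v) * monom_eval (m - var_monom v) a)"
    by (subst sum.reindex[OF inj]) simp
  also have "\<dots> = (\<Sum>m\<in>A. Poly_Mapping.lookup p m *
      (of_nat (Poly_Mapping.lookup m v) * monom_eval (m - var_monom v) a))"
  proof (rule sum.cong[OF refl])
    fix m assume "m \<in> A"
    then have pos: "0 < Poly_Mapping.lookup m v" by (simp add: A_def)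
    then show "Poly_Mapping.lookup (mpderiv v p) (m - var_monom v) * monom_eval (m - var_monom v) a =
        Poly_Mapping.lookup p m * (of_nat (Poly_Mapping.lookup m v) * monom_eval (m - var_monom v) a)"
      using minus_plus_var_monom[OF pos] by (simp add: lookup_mpderiv lookup_minus)
  qed
  also have "\<dots> = (\<Sum>m\<in>Poly_Mapping.keys p. Poly_Mapping.lookup p m *
      (of_nat (Poly_Mapping.lookup m v) * monom_eval (m - var_monom v) a))"
    by (rule sum.mono_neutral_left) (auto simp: A_def)
  finally show ?thesis .
qed

lemma monom_eval_minus_var:
  assumes "finite V" "Poly_Mapping.keys m \<subseteq> V" "v \<in> V"
  shows "monom_eval (m - var_monom v) a =
    a v ^ (Poly_Mapping.lookup m v - 1) * (\<Prod>w\<in>V-{v}. a w ^ Poly_Mapping.lookup m w)"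
proof -
  have "monom_eval (m - var_monom v) a = (\<Prod>w\<in>V. a w ^ Poly_Mapping.lookup (m - var_monom v) w)"
    by (rule monom_eval_superset) (use assms keys_minus_var_monom[of m v] in auto)
  also have "\<dots> = a v ^ Poly_Mapping.lookup (m - var_monom v) v *
      (\<Prod>w\<in>V-{v}. a w ^ Poly_Mapping.lookup (m - var_monom v) w)"
    using assms by (simp add: prod.remove)
  also have "\<dots> = a v ^ (Poly_Mapping.lookup m v - 1) * (\<Prod>w\<in>V-{v}. a w ^ Poly_Mapping.lookup m w)"
    by (auto simp: lookup_minus intro!: prod.cong)
  finally show ?thesis .
qed

lemma derivation_on_monom_eval:
  assumes E: "subring_C E" and D: "derivation_on E D"
    and V: "finite V" "Poly_Mapping.keys m \<subseteq> V" and a: "\<forall>v\<in>V. a v \<in> E"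
  shows "D (monom_eval m a) =
    (\<Sum>v\<in>V. of_nat (Poly_Mapping.lookup m v) * monom_eval (m - var_monom v) a * D (a v))"
proof -
  have "D (monom_eval m a) = D (\<Prod>w\<in>V. a w ^ Poly_Mapping.lookup m w)"
    using monom_eval_superset[OF V] by simp
  also have "\<dots> = (\<Sum>v\<in>V. D (a v ^ Poly_Mapping.lookup m v) * (\<Prod>w\<in>V-{v}. a w ^ Poly_Mapping.lookup m w))"
    using a by (intro derivation_on_prod[OF E D V(1)]) (auto intro: subring_C_power[OF E])
  also have "\<dots> = (\<Sum>v\<in>V. of_nat (Poly_Mapping.lookup m v) * monom_eval (m - var_monom v) a * D (a v))"
  proof (rule sum.cong[OF refl])
    fix v assume "v \<in> V"
    then show "D (a v ^ Poly_Mapping.lookup m v) * (\<Prod>w\<in>V-{v}. a w ^ Poly_Mapping.lookup m w) =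
        of_nat (Poly_Mapping.lookup m v) * monom_eval (m - var_monom v) a * D (a v)"
      using a by (simp only: derivation_on_power[OF E D] monom_eval_minus_var[OF V \<open>v \<in> V\<close>]) simp
  qed
  finally show ?thesis .
qed

lemma derivation_over_mpeval:
  assumes ED: "derivation_over K E D"
    and V: "finite V" "mvars p \<subseteq> V" and p: "coeffs_in K p" and a: "\<forall>v\<in>V. a v \<in> E"
  shows "D (mpeval p a) = (\<Sum>v\<in>V. mpeval (mpderiv v p) a * D (a v))"
proof -
  have E: "subring_C E" and D: "derivation_on E D" and coeff_E: "Poly_Mapping.lookup p m \<in> E"
    and D_coeff: "D (Poly_Mapping.lookup p m) = 0" for m
    using ED p unfolding derivation_over_def coeffs_in_def by auto
  have monom_E: "monom_eval m a \<in> E" if "m \<in> Poly_Mapping.keys p" for m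
    using that V a unfolding monom_eval_def mvars_def
    by (intro subring_C_prod[OF E] subring_C_power[OF E]) auto
  have "D (mpeval p a) = (\<Sum>m\<in>Poly_Mapping.keys p. D (Poly_Mapping.lookup p m * monom_eval m a))"
    unfolding mpeval_eq_sum using monom_E coeff_E
    by (intro derivation_on_sum[OF E D] subring_C_mult[OF E])
  also have "\<dots> = (\<Sum>m\<in>Poly_Mapping.keys p. Poly_Mapping.lookup p m *
      (\<Sum>v\<in>V. of_nat (Poly_Mapping.lookup m v) * monom_eval (m - var_monom v) a * D (a v)))"
  proof (rule sum.cong[OF refl])
    fix m assume m: "m \<in> Poly_Mapping.keys p"
    then have "Poly_Mapping.keys m \<subseteq> V" using V(2) unfolding mvars_def by auto
    then show "D (Poly_Mapping.lookup p m * monom_eval m a) = Poly_Mapping.lookup p m *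
        (\<Sum>v\<in>V. of_nat (Poly_Mapping.lookup m v) * monom_eval (m - var_monom v) a * D (a v))"
      using derivation_on_mult[OF E D coeff_E monom_E[OF m]] D_coeff
        derivation_on_monom_eval[OF E D V(1) _ a] by simp
  qed
  also have "\<dots> = (\<Sum>v\<in>V. mpeval (mpderiv v p) a * D (a v))"
    by (simp add: mpeval_mpderiv sum_distrib_left sum_distrib_right mult.assoc sum.swap[of _ V])
  finally show ?thesis .
qed

section \<open>A size function decreased by partial derivatives\<close>

definition monom_degree :: "('v \<Rightarrow>\<^sub>0 nat) \<Rightarrow> nat" where
  "monom_degree m = (\<Sum>v\<in>Poly_Mapping.keys m. Poly_Mapping.lookup m v)"

lemma monom_degree_superset:
  "finite W \<Longrightarrow> Poly_Mapping.keys m \<subseteq> W \<Longrightarrow> monom_degree m = (\<Sum>v\<in>W. Poly_Mapping.lookup m v)"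
  unfolding monom_degree_def by (rule sum.mono_neutral_left) (auto simp: in_keys_iff)

lemma monom_degree_add: "monom_degree (a + b) = monom_degree a + monom_degree b"
proof -
  let ?W = "Poly_Mapping.keys a \<union> Poly_Mapping.keys b"
  have "monom_degree (a + b) = (\<Sum>v\<in>?W. Poly_Mapping.lookup (a + b) v)"
    by (rule monom_degree_superset) (auto simp: keys_add)
  also have "\<dots> = (\<Sum>v\<in>?W. Poly_Mapping.lookup a v) + (\<Sum>v\<in>?W. Poly_Mapping.lookup b v)"
    by (simp add: lookup_add sum.distrib)
  also have "\<dots> = monom_degree a + monom_degree b" by (subst (1 2) monom_degree_superset[where W = ?W]) auto
  finally show ?thesis .
qed

lemma monom_degree_var_monom: "monom_degree (var_monom v) = 1"
  by (simp add: monom_degree_def)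

lemma monom_degree_minus_var:
  assumes "0 < Poly_Mapping.lookup m v"
  shows "monom_degree m = monom_degree (m - var_monom v) + 1"
proof -
  have "monom_degree m = monom_degree ((m - var_monom v) + var_monom v)"
    using minus_plus_var_monom[OF assms] by simp
  also have "\<dots> = monom_degree (m - var_monom v) + 1"
    using monom_degree_add[of "m - var_monom v" "var_monom v"] monom_degree_var_monom[of v] by simp
  finally show ?thesis .
qed

definition support_degree :: "'v mpoly_c \<Rightarrow> nat" where
  "support_degree p = (\<Sum>m\<in>Poly_Mapping.keys p. monom_degree m)"

lemma support_degree_mpderiv_less:
  assumes "mpderiv v p \<noteq> 0"
  shows "support_degree (mpderiv v p) < support_degree p"
proof -
  define A where "A = {m \<in> Poly_Mapping.keys p. 0 < Poly_Mapping.lookup m v}"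
  have fA: "finite A" unfolding A_def by simp
  have sub: "Poly_Mapping.keys (mpderiv v p) \<subseteq> (\<lambda>m. m - var_monom v) ` A"
    using keys_mpderiv_subset unfolding A_def .
  have inj: "inj_on (\<lambda>m. m - var_monom v) A"
    using inj_on_minus_var_monom by (rule inj_on_subset) (auto simp: A_def)
  have ne: "Poly_Mapping.keys (mpderiv v p) \<noteq> {}"
  proof
    assume "Poly_Mapping.keys (mpderiv v p) = {}"
    then have "mpderiv v p = 0" by (intro poly_mapping_eqI) (auto simp: in_keys_iff)
    then show False using assms by simp
  qed
  then have Ane: "A \<noteq> {}" using sub by auto
  have "support_degree (mpderiv v p) \<le> (\<Sum>m\<in>(\<lambda>m. m - var_monom v) ` A. monom_degree m)"
    unfolding support_degree_def by (rule sum_mono2) (use fA sub in auto)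
  also have "\<dots> = (\<Sum>m\<in>A. monom_degree (m - var_monom v))" by (subst sum.reindex[OF inj]) simp
  also have "\<dots> < (\<Sum>m\<in>A. monom_degree m)"
  proof (rule sum_strict_mono[OF fA Ane])
    fix m assume "m \<in> A"
    then have "0 < Poly_Mapping.lookup m v" by (simp add: A_def)
    from monom_degree_minus_var[OF this] show "monom_degree (m - var_monom v) < monom_degree m" by linarith
  qed
  also have "\<dots> \<le> support_degree p" unfolding support_degree_def by (rule sum_mono2) (auto simp: A_def)
  finally show ?thesis .
qed

lemma coeffs_in_mpderiv:
  assumes K: "subring_C K" and p: "coeffs_in K p"
  shows "coeffs_in K (mpderiv v p)"
  using p subring_C_mult[OF K] subring_C_of_nat[OF K] unfolding coeffs_in_def lookup_mpderiv by blast

lemma mvars_mpderiv: "mvars (mpderiv v p) \<subseteq> mvars p"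
proof
  fix w assume "w \<in> mvars (mpderiv v p)"
  then obtain m' where m': "m' \<in> Poly_Mapping.keys (mpderiv v p)" "w \<in> Poly_Mapping.keys m'"
    unfolding mvars_def by auto
  then have "m' + var_monom v \<in> Poly_Mapping.keys p" by (auto simp: in_keys_iff lookup_mpderiv)
  moreover have "w \<in> Poly_Mapping.keys (m' + var_monom v)" using m'(2) by (auto simp: in_keys_iff lookup_add)
  ultimately show "w \<in> mvars p" unfolding mvars_def by auto
qed

lemma eq_0_if_mpderivs_zero:
  assumes vars: "mvars p \<subseteq> {..<n}" and derivs: "\<forall>k<n. mpderiv k p = 0" and root: "mpeval p a = 0"
  shows "p = 0"
proof -
  have "m = 0" if m: "m \<in> Poly_Mapping.keys p" for m
  proof (rule poly_mapping_eqI, rule ccontr)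
    fix v assume "Poly_Mapping.lookup m v \<noteq> Poly_Mapping.lookup 0 v"
    then have pos: "0 < Poly_Mapping.lookup m v" by simp
    then have "v \<in> mvars p" using m unfolding mvars_def by (auto simp: in_keys_iff)
    then have "v < n" using vars by auto
    then have "Poly_Mapping.lookup (mpderiv v p) (m - var_monom v) = 0" using derivs by simp
    then show False
      using pos m minus_plus_var_monom[OF pos] by (simp add: lookup_mpderiv lookup_minus in_keys_iff)
  qed
  then have keys: "Poly_Mapping.keys p \<subseteq> {0}" by blast
  then have "Poly_Mapping.lookup p 0 = 0"
    using root mpeval_superset[OF _ keys, of a] by (simp add: monom_eval_def)
  then show ?thesis using keys by (intro poly_mapping_eqI) (auto simp: in_keys_iff)
qed

section \<open>The Jacobian criterion\<close>

lemma implicit_derivative: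
  fixes n :: nat and x y :: "nat \<Rightarrow> complex"
  assumes ED: "derivation_over K E D" and i: "i < n"
    and f: "coeffs_in K f" "mvars f \<subseteq> Inl ` {..<n} \<union> Inr ` {..<n}" "mpeval f (case_sum x y) = 0"
    and x: "\<forall>l<n. x l \<in> E \<and> D (x l) = (if l = i then 1 else 0)" and y: "\<forall>k<n. y k \<in> E"
  shows "mpeval (mpderiv (Inl i) f) (case_sum x y) =
    (\<Sum>k<n. - mpeval (mpderiv (Inr k) f) (case_sum x y) * D (y k))"
proof -
  let ?a = "case_sum x y"
  have E: "subring_C E" "derivation_on E D" using ED by (auto simp: derivation_over_def)
  have "(\<Sum>l<n. mpeval (mpderiv (Inl l) f) ?a * D (x l)) =
      (\<Sum>l<n. if l = i then mpeval (mpderiv (Inl l) f) ?a else 0)"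
    using x by (intro sum.cong) auto
  also have "\<dots> = mpeval (mpderiv (Inl i) f) ?a" using i by simp
  finally have x_part:
    "(\<Sum>l<n. mpeval (mpderiv (Inl l) f) ?a * D (x l)) = mpeval (mpderiv (Inl i) f) ?a" .
  have "0 = D (mpeval f ?a)" using f(3) derivation_on_zero[OF E] by simp
  also have "\<dots> = (\<Sum>v\<in>Inl ` {..<n} \<union> Inr ` {..<n}. mpeval (mpderiv v f) ?a * D (?a v))"
    using x y by (intro derivation_over_mpeval[OF ED _ f(2,1)]) auto
  also have "\<dots> = (\<Sum>l<n. mpeval (mpderiv (Inl l) f) ?a * D (x l)) +
      (\<Sum>k<n. mpeval (mpderiv (Inr k) f) ?a * D (y k))"
    by (subst sum.union_disjoint) (auto simp: sum.reindex)
  finally show ?thesis using x_part by (simp add: sum_negf eq_neg_iff_add_eq_0)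
qed

lemma mpderivs_vanish_at_root:
  assumes ED: "\<forall>i<n. derivation_over K (E i) (D i) \<and> (\<forall>k<n. y k \<in> E i)"
    and Y: "det (mat n n (\<lambda>(k, i). D i (y k))) \<noteq> 0"
    and P: "coeffs_in K P" "mvars P \<subseteq> {..<n}" "mpeval P y = 0"
  shows "\<forall>k<n. mpeval (mpderiv k P) y = 0"
proof -
  define Yt where "Yt = transpose_mat (mat n n (\<lambda>(k, i). D i (y k)))"
  define w where "w = vec n (\<lambda>k. mpeval (mpderiv k P) y)"
  have "Yt *\<^sub>v w = 0\<^sub>v n"
  proof (rule eq_vecI)
    fix i assume "i < dim_vec (0\<^sub>v n :: complex vec)"
    then have i: "i < n" by simp
    have "D i (mpeval P y) = (\<Sum>k\<in>{..<n}. mpeval (mpderiv k P) y * D i (y k))"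
      using ED i by (intro derivation_over_mpeval[OF _ _ P(2,1)]) auto
    moreover have "D i (mpeval P y) = 0"
      using ED i P(3) derivation_on_zero by (auto simp: derivation_over_def)
    ultimately show "(Yt *\<^sub>v w) $ i = 0\<^sub>v n $ i"
      using i by (simp add: Yt_def w_def scalar_prod_def atLeast0LessThan mult.commute)
  qed (simp add: Yt_def)
  moreover have "det Yt \<noteq> 0" using Y by (simp add: Yt_def det_transpose[of _ n])
  moreover have "Yt \<in> carrier_mat n n" "w \<in> carrier_vec n" by (simp_all add: Yt_def w_def)
  ultimately have "w = 0\<^sub>v n" using det_0_iff_vec_prod_zero_field by blast
  then show ?thesis unfolding w_def by (metis index_vec index_zero_vec(1))
qed

lemma alg_indep_if_derivation_matrix_nonsingular:
  assumes K: "subring_C K"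
    and ED: "\<forall>i<n. derivation_over K (E i) (D i) \<and> (\<forall>k<n. y k \<in> E i)"
    and Y: "det (mat n n (\<lambda>(k, i). D i (y k))) \<noteq> 0"
  shows "alg_indep K n y"
proof (rule ccontr)
  define Z where "Z P \<longleftrightarrow> coeffs_in K P \<and> mvars P \<subseteq> {..<n} \<and> mpeval P y = 0 \<and> P \<noteq> 0"
    for P :: "nat mpoly_c"
  assume "\<not> alg_indep K n y"
  then have "\<exists>P. Z P" unfolding alg_indep_def Z_def by blast
  then obtain P where "Z P" and P_min: "\<And>Q. Z Q \<Longrightarrow> support_degree P \<le> support_degree Q"
    using ex_has_least_nat[of Z _ support_degree] by metis
  then have P: "coeffs_in K P" "mvars P \<subseteq> {..<n}" "mpeval P y = 0" "P \<noteq> 0" unfolding Z_def by auto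
  have "mpderiv k P = 0" if k: "k < n" for k
  proof (rule ccontr)
    assume "mpderiv k P \<noteq> 0"
    moreover have "mpeval (mpderiv k P) y = 0" using mpderivs_vanish_at_root[OF ED Y P(1-3)] k by blast
    ultimately have "Z (mpderiv k P)"
      using coeffs_in_mpderiv[OF K P(1)] mvars_mpderiv[of k P] P(2) unfolding Z_def by auto
    then show False using P_min support_degree_mpderiv_less[OF \<open>mpderiv k P \<noteq> 0\<close>] by fastforce
  qed
  then show False using eq_0_if_mpderivs_zero[OF P(2) _ P(3)] P(4) by blast
qed

theorem theorem1:
  fixes K :: "complex set" and n :: nat and x y :: "nat \<Rightarrow> complex"
    and f :: "nat \<Rightarrow> (nat + nat) mpoly_c"
  assumes "is_subfield_C K" and "\<rat> \<subseteq> K" and "n \<ge> 1"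
    and "\<forall>j<n. coeffs_in K (f j) \<and> mvars (f j) \<subseteq> Inl ` {..<n} \<union> Inr ` {..<n}"
    and "\<forall>j<n. mpeval (f j) (case_sum x y) = 0"
    and "alg_indep K n x"
    and "det (mat n n (\<lambda>(j, i). mpeval (mpderiv (Inl i) (f j)) (case_sum x y))) \<noteq> 0"
  shows "alg_indep K n y"
proof -
  have K: "subring_C K" using assms(1) by (rule subfield_imp_subring_C)
  obtain E D where ED: "\<forall>i. derivation_over K (E i) (D i) \<and>
      (\<forall>l<n. x l \<in> E i \<and> D i (x l) = (if l = i then 1 else 0)) \<and> (\<forall>k<n. y k \<in> E i)"
    using coordinate_derivations[OF K assms(6)] by blast
  define Y where "Y = mat n n (\<lambda>(k, i). D i (y k))"
  define M where "M = mat n n (\<lambda>(j, k). - mpeval (mpderiv (Inr k) (f j)) (case_sum x y))"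
  have "mat n n (\<lambda>(j, i). mpeval (mpderiv (Inl i) (f j)) (case_sum x y)) = M * Y"
  proof (rule eq_matI)
    fix j i assume "j < dim_row (M * Y)" "i < dim_col (M * Y)"
    then have "j < n" "i < n" by (auto simp: M_def Y_def)
    then show "mat n n (\<lambda>(j, i). mpeval (mpderiv (Inl i) (f j)) (case_sum x y)) $$ (j, i) =
        (M * Y) $$ (j, i)"
      using implicit_derivative[of K "E i" "D i" i n "f j" x y] ED assms(4,5)
      by (simp add: M_def Y_def scalar_prod_def atLeast0LessThan)
  qed (auto simp: M_def Y_def)
  then have "det Y \<noteq> 0" using assms(7) det_mult[of M n Y] by (auto simp: M_def Y_def)
  then show ?thesis using alg_indep_if_derivation_matrix_nonsingular[OF K] ED unfolding Y_def by blast
qed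

end
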